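(* Let $a_1\ge1$ and $n \ge 3$ be integers, and suppose that $p$ is an odd primitive divisor of $\ell_n$ with $(D \mid p) = 1$. Then there exists $\bm{x} \in \mathcal{L}(f)$ such that $\tau(\bm{x}; p) = \rho(\bm{x}; p) = 2n$ and $x_j \not\equiv 0 \pmod p$ for all $j \ge 0$. Moreover, if $n$ is odd, then there exists $\bm{y} \in \mathcal{L}(f)$ such that $\tau(\bm{y}; p) = \rho(\bm{y}; p) = n$ and $y_j \not\equiv 0 \pmod p$ for all $j\ge0$.
   Context: Let $f := X^2 - a_1X - 1$, $D := a_1^2+4$, and $\alpha,\beta$ the roots of $f$ ($\alpha\beta=-1$, $\alpha+\beta=a_1$). $\mathcal{L}(f)$ is the set of integer sequences $\bm{x}=(x_n)_{n\ge0}$ with $x_{n+2} = a_1x_{n+1} + x_n$ for all $n\ge0$. For an integer $m\ge1$, $\tau(\bm{x}; m)$ is the minimal integer $t \ge 1$ with $x_{n+t}\equiv x_n \pmod m$ for all sufficiently large $n$, and $\rho(\bm{x};m) := \#\{x_n \bmod m : n\ge 0\}$. The Lehmer sequence is $\ell_n := \frac{\alpha^n - (-\beta)^n}{\alpha + \beta}$ for odd $n$ and $\ell_n := \frac{\alpha^n - (-\beta)^n}{\alpha^2 - \beta^2}$ for even $n$ (integers). A prime $p$ is a primitive divisor of $\ell_n$ if $p \mid \ell_n$ but $p \nmid (\alpha^2-\beta^2)^2\ell_1\cdots\ell_{n-1}$, where $(\alpha^2-\beta^2)^2 = a_1^2D$. $(D\mid p)$ is the Legendre symbol. *)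

theory Defs
  imports "HOL-Analysis.Analysis" "HOL-Number_Theory.Number_Theory"
begin

text \<open>Roots of f = X^2 - a X - 1, with D = a^2 + 4.\<close>
definition discr :: "int \<Rightarrow> int" where
  "discr a = a^2 + 4"

definition alpha :: "int \<Rightarrow> real" where
  "alpha a = (real_of_int a + sqrt (real_of_int (discr a))) / 2"

definition beta :: "int \<Rightarrow> real" where
  "beta a = (real_of_int a - sqrt (real_of_int (discr a))) / 2"

text \<open>Lehmer sequence (as a real number; it is in fact an integer).\<close>
definition lehmer :: "int \<Rightarrow> nat \<Rightarrow> real" where
  "lehmer a n = (if odd n
      then (alpha a ^ n - (- beta a) ^ n) / (alpha a + beta a)
      else (alpha a ^ n - (- beta a) ^ n) / (alpha a ^ 2 - beta a ^ 2))"

definition rdvd :: "int \<Rightarrow> real \<Rightarrow> bool" where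
  "rdvd p x \<longleftrightarrow> (\<exists>k::int. x = real_of_int p * real_of_int k)"

definition primitive_divisor :: "int \<Rightarrow> int \<Rightarrow> nat \<Rightarrow> bool" where
  "primitive_divisor a p n \<longleftrightarrow>
     rdvd p (lehmer a n) \<and>
     \<not> rdvd p ((alpha a ^ 2 - beta a ^ 2)^2 * (\<Prod>k\<in>{1..<n}. lehmer a k))"

definition Lf :: "int \<Rightarrow> (nat \<Rightarrow> int) set" where
  "Lf a = {x. \<forall>n. x (n + 2) = a * x (n + 1) + x n}"

definition tau :: "(nat \<Rightarrow> int) \<Rightarrow> int \<Rightarrow> nat" where
  "tau x m = (LEAST t. t \<ge> 1 \<and> (\<exists>N. \<forall>n\<ge>N. [x (n + t) = x n] (mod m)))"

definition rho :: "(nat \<Rightarrow> int) \<Rightarrow> int \<Rightarrow> nat" where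
  "rho x m = card ((\<lambda>n. x n mod m) ` UNIV)"

end

(* Since (D | p) = 1, f has a root t modulo p, and x_j = t^j mod p is realised by the
   sequence in L(f) with x_0 = 1, x_1 = t; both its period and its number of residues are
   the multiplicative order of t modulo p. Reducing the identity
   (denominator of l_k) * l_k = alpha^k - alpha^-k modulo p under alpha |-> t gives
   t^k c_k l_k = t^(2k) - 1 (mod p) with c_k prime to p, so the primitivity of p says
   exactly that t^2 has order n; hence t has order n or 2n, according as t^n = 1 or not.
   For even n this forces order 2n. For odd n the two roots t and a - t satisfy
   t^n (a - t)^n = -1, so exactly one of them has order n and the other order 2n. *)

theory Submission
  imports Defs
begin

fun lehmer_int :: "int \<Rightarrow> nat \<Rightarrow> int" where
  "lehmer_int a 0 = 0"
| "lehmer_int a (Suc 0) = 1"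
| "lehmer_int a (Suc (Suc 0)) = 1"
| "lehmer_int a (Suc (Suc (Suc 0))) = a^2 + 3"
| "lehmer_int a (Suc (Suc (Suc (Suc k)))) = (a^2 + 2) * lehmer_int a (Suc (Suc k)) - lehmer_int a k"

lemma sqrt_discr_sq: "sqrt (real_of_int (discr a)) ^ 2 = real_of_int (discr a)"
  by (simp add: discr_def add_nonneg_nonneg)

lemma sqrt_discr_pos: "sqrt (real_of_int (discr a)) > 0"
  by (simp add: discr_def add_nonneg_pos)

lemma alpha_plus_beta: "alpha a + beta a = a"
  by (simp add: alpha_def beta_def field_simps)

lemma alpha_minus_beta: "alpha a - beta a = sqrt (real_of_int (discr a))"
  by (simp add: alpha_def beta_def field_simps)

lemma alpha_times_beta: "alpha a * beta a = -1"
proof -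
  have "alpha a * beta a = (real_of_int a ^ 2 - sqrt (real_of_int (discr a)) ^ 2) / 4"
    by (simp add: alpha_def beta_def field_simps power2_eq_square)
  then show ?thesis by (simp add: sqrt_discr_sq discr_def)
qed

lemma lehmer_add_4:
  "lehmer a (k + 4) = (real_of_int a ^ 2 + 2) * lehmer a (k + 2) - lehmer a k"
proof -
  define z where "z = alpha a"
  define w where "w = - beta a"
  have zw: "z * w = 1" using alpha_times_beta[of a] by (simp add: z_def w_def)
  have "z^2 + w^2 = (alpha a + beta a)^2 - 2 * (alpha a * beta a)"
    by (simp add: z_def w_def power2_eq_square algebra_simps)
  then have zw2: "z^2 + w^2 = real_of_int a ^ 2 + 2"
    by (simp add: alpha_plus_beta alpha_times_beta)
  have "z^(k+4) - w^(k+4) = (z^2+w^2) * (z^(k+2) - w^(k+2)) - (z*w)^2 * (z^k - w^k)"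
    by (simp add: power_add eval_nat_numeral algebra_simps)
  then have W: "z^(k+4) - w^(k+4) = (real_of_int a ^ 2 + 2) * (z^(k+2) - w^(k+2)) - (z^k - w^k)"
    by (simp add: zw zw2)
  define d where "d = (if odd k then alpha a + beta a else alpha a ^ 2 - beta a ^ 2)"
  have L: "lehmer a j = (z^j - w^j) / d" if "odd j = odd k" for j
    using that unfolding lehmer_def d_def z_def w_def by auto
  show ?thesis
    using L[of "k+4"] L[of "k+2"] L[of k] W by (simp add: diff_divide_distrib right_diff_distrib)
qed

lemma lehmer_small:
  assumes "a \<noteq> 0"
  shows "lehmer a 1 = 1" "lehmer a 2 = 1" "lehmer a 3 = real_of_int a ^ 2 + 3"
proof -
  have a: "real_of_int a \<noteq> 0" using assms by simp
  show "lehmer a 1 = 1" using a by (simp add: lehmer_def alpha_plus_beta)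
  have "alpha a ^ 2 - beta a ^ 2 = (alpha a + beta a) * (alpha a - beta a)"
    by (simp add: power2_eq_square algebra_simps)
  then have "alpha a ^ 2 - beta a ^ 2 \<noteq> 0"
    using a sqrt_discr_pos[of a] by (simp add: alpha_plus_beta alpha_minus_beta)
  then show "lehmer a 2 = 1" by (simp add: lehmer_def)
  have "alpha a ^ 3 - (- beta a) ^ 3
      = (alpha a + beta a) * ((alpha a + beta a)^2 - 3 * (alpha a * beta a))"
    by (simp add: power2_eq_square power3_eq_cube algebra_simps)
  then show "lehmer a 3 = real_of_int a ^ 2 + 3"
    using a by (simp add: lehmer_def alpha_plus_beta alpha_times_beta)
qed

lemma lehmer_eq_lehmer_int:
  assumes "a \<noteq> 0"
  shows "lehmer a k = real_of_int (lehmer_int a k)"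
  using assms
proof (induction a k rule: lehmer_int.induct)
  case (5 a k)
  then show ?case using lehmer_add_4[of a k] by (simp add: eval_nat_numeral)
qed (use lehmer_small in \<open>simp_all add: lehmer_def numeral_2_eq_2 numeral_3_eq_3\<close>)

lemma rdvd_of_int_iff: "rdvd p (real_of_int z) \<longleftrightarrow> p dvd z"
  unfolding rdvd_def dvd_def by (metis of_int_eq_iff of_int_mult)

lemma primitive_divisor_lehmer_int:
  fixes a p :: int
  assumes "a \<noteq> 0" "primitive_divisor a p n"
  shows "p dvd lehmer_int a n" "\<not> p dvd a" "\<not> p dvd discr a"
    "\<And>k. 0 < k \<Longrightarrow> k < n \<Longrightarrow> \<not> p dvd lehmer_int a k"
proof -
  have "(alpha a ^ 2 - beta a ^ 2)^2 = ((alpha a + beta a) * (alpha a - beta a))^2"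
    by (simp add: power2_eq_square algebra_simps)
  also have "\<dots> = real_of_int (a^2 * discr a)"
    by (simp add: alpha_plus_beta alpha_minus_beta sqrt_discr_sq power_mult_distrib)
  finally have "(alpha a ^ 2 - beta a ^ 2)^2 = real_of_int (a^2 * discr a)" .
  then have H: "p dvd lehmer_int a n" "\<not> p dvd a^2 * discr a * (\<Prod>k\<in>{1..<n}. lehmer_int a k)"
    using assms(2) unfolding primitive_divisor_def lehmer_eq_lehmer_int[OF assms(1)]
    by (simp_all flip: of_int_mult of_int_prod add: rdvd_of_int_iff)
  show "p dvd lehmer_int a n" by (fact H(1))
  show "\<not> p dvd a" using H(2) by (metis dvd_mult2 power2_eq_square)
  show "\<not> p dvd discr a" using H(2) by (metis dvd_mult dvd_mult2)
  show "\<not> p dvd lehmer_int a k" if "0 < k" "k < n" for k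
  proof
    assume "p dvd lehmer_int a k"
    moreover have "lehmer_int a k dvd (\<Prod>k\<in>{1..<n}. lehmer_int a k)"
      using that by (intro dvd_prodI) auto
    ultimately show False using H(2) by (meson dvd_mult dvd_trans)
  qed
qed

text \<open>The image of the denominator of \<open>\<ell>\<^sub>k\<close> (\<open>\<alpha> + \<beta>\<close> or \<open>\<alpha>\<^sup>2 - \<beta>\<^sup>2\<close>) under
  \<open>\<alpha> \<mapsto> t\<close>, \<open>-\<beta> \<mapsto> t\<^sup>-\<^sup>1\<close>, where \<open>t\<close> is a root of \<open>f\<close> modulo \<open>p\<close>;
  then \<open>\<alpha> - \<beta> \<mapsto> t + t\<^sup>-\<^sup>1 = 2t - a\<close>.\<close>
definition lehmer_denom :: "int \<Rightarrow> int \<Rightarrow> nat \<Rightarrow> int" where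
  "lehmer_denom a t k = (if odd k then a else a * (2 * t - a))"

lemma lehmer_int_root_cong:
  fixes a p t :: int
  assumes "p dvd t^2 - a*t - 1"
  shows "[t^k * lehmer_denom a t k * lehmer_int a k = t^(2*k) - 1] (mod p)"
  unfolding cong_iff_dvd_diff using assms
proof (induction a k rule: lehmer_int.induct)
  case (2 a)
  have "t^1 * lehmer_denom a t 1 * lehmer_int a 1 - (t^(2*1) - 1) = -(t^2 - a*t - 1)"
    by (simp add: lehmer_denom_def power2_eq_square algebra_simps)
  then show ?case using 2 by (metis One_nat_def dvd_minus_iff)
next
  case (3 a)
  have "t^2 * lehmer_denom a t 2 * lehmer_int a 2 - (t^(2*2) - 1)
      = -((t^2 - a*t - 1) * (t^2 - a*t + 1))"
    by (simp add: lehmer_denom_def power2_eq_square eval_nat_numeral algebra_simps)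
  then show ?case using 3 by (metis numeral_2_eq_2 dvd_minus_iff dvd_mult2)
next
  case (4 a)
  have "lehmer_denom a t 3 = a" by (simp add: lehmer_denom_def)
  then have "t^3 * lehmer_denom a t 3 * lehmer_int a 3 - (t^(2*3) - 1)
      = -((t^2 - a*t - 1) * (t^4 + a*t^3 + (1+a^2)*t^2 - a*t + 1))"
    by (simp add: power2_eq_square eval_nat_numeral algebra_simps)
  then show ?case using 4 by (metis numeral_3_eq_3 dvd_minus_iff dvd_mult2)
next
  case (5 a k)
  define E where "E j = t^j * lehmer_denom a t j * lehmer_int a j - (t^(2*j) - 1)" for j
  have c: "lehmer_denom a t (k+4) = lehmer_denom a t k" "lehmer_denom a t (k+2) = lehmer_denom a t k"
    by (auto simp: lehmer_denom_def)
  have r: "lehmer_int a (k+4) = (a^2 + 2) * lehmer_int a (k+2) - lehmer_int a k"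
    by (simp add: eval_nat_numeral)
  have "E (k+4) = (a^2+2) * t^2 * E (k+2) - t^4 * E k
      + (1 - t^(2*k+4)) * (t^2 - a*t - 1) * (t^2 + a*t - 1)"
    unfolding E_def c r by (simp add: power_add power_mult eval_nat_numeral algebra_simps)
  moreover have "p dvd E (k+2)" "p dvd E k" using 5 by (auto simp: E_def eval_nat_numeral)
  ultimately have "p dvd E (k+4)" using 5(3) by (simp add: dvd_add dvd_diff)
  then show ?case by (simp add: E_def eval_nat_numeral)
qed simp

lemma root_not_dvd:
  fixes a p t :: int
  assumes "prime p" "p dvd t^2 - a*t - 1"
  shows "\<not> p dvd t" "\<not> p dvd discr a \<Longrightarrow> \<not> p dvd 2*t - a"
proof -
  have "t * (t - a) = (t^2 - a*t - 1) + 1" by (simp add: power2_eq_square algebra_simps)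
  then show "\<not> p dvd t"
    using assms by (metis dvd_add_right_iff dvd_mult2 not_prime_unit)
  have "(2*t - a)^2 = 4 * (t^2 - a*t - 1) + discr a"
    by (simp add: discr_def power2_eq_square algebra_simps)
  then show "\<not> p dvd 2*t - a" if "\<not> p dvd discr a"
    using assms that by (metis dvd_add_right_iff dvd_mult pos2 prime_dvd_power_iff)
qed

lemma root_pow_cong:
  fixes a p t :: int
  assumes "a \<noteq> 0" "prime p" "primitive_divisor a p n" "p dvd t^2 - a*t - 1"
  shows "[t^(2*n) = 1] (mod p)" "\<And>k. 0 < k \<Longrightarrow> k < n \<Longrightarrow> \<not> [t^(2*k) = 1] (mod p)"
proof -
  note E = lehmer_int_root_cong[OF assms(4)]
  note pd = primitive_divisor_lehmer_int[OF assms(1,3)]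
  have "[t^(2*n) - 1 = 0] (mod p)"
    using cong_sym[OF E[of n]] pd(1) by (metis cong_0_iff cong_trans dvd_mult)
  then show "[t^(2*n) = 1] (mod p)" by (simp add: cong_iff_dvd_diff)
  show "\<not> [t^(2*k) = 1] (mod p)" if "0 < k" "k < n" for k
  proof
    assume "[t^(2*k) = 1] (mod p)"
    then have "[t^(2*k) - 1 = 1 - 1] (mod p)" by (rule cong_diff[OF _ cong_refl])
    then have "[t^k * lehmer_denom a t k * lehmer_int a k = 0] (mod p)"
      using cong_trans[OF E[of k]] by simp
    moreover have "\<not> p dvd t^k" "\<not> p dvd lehmer_denom a t k"
      using root_not_dvd[OF assms(2,4)] pd(2,3) assms(2)
      by (auto simp: lehmer_denom_def prime_dvd_mult_iff dest: prime_dvd_power)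
    ultimately have "p dvd lehmer_int a k" using assms(2) by (simp add: cong_0_iff prime_dvd_mult_iff)
    then show False using pd(4) that by blast
  qed
qed

definition int_ord :: "int \<Rightarrow> int \<Rightarrow> nat" where
  "int_ord p t = ord (nat p) (nat (t mod p))"

lemma int_ord_pow_cong_iff:
  fixes p t :: int
  assumes "p > 0" "coprime p t"
  shows "[t ^ d = t ^ e] (mod p) \<longleftrightarrow> [d = e] (mod int_ord p t)"
proof -
  define u where "u = nat (t mod p)"
  have u: "int u = t mod p" using assms(1) by (simp add: u_def)
  have "coprime (int (nat p)) (int u)" using assms by (simp add: u)
  then have cop: "coprime (nat p) u" by (simp only: coprime_int_iff)
  have "[t ^ d = t ^ e] (mod p) \<longleftrightarrow> [(t mod p) ^ d = (t mod p) ^ e] (mod p)"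
    by (simp add: cong_def power_mod)
  also have "\<dots> \<longleftrightarrow> [u ^ d = u ^ e] (mod nat p)"
    using assms(1) cong_int_iff[of "u ^ d" "u ^ e" "nat p"] by (simp add: u)
  also have "\<dots> \<longleftrightarrow> [d = e] (mod int_ord p t)"
    using order_divides_expdiff[OF cop] by (simp add: int_ord_def u_def)
  finally show ?thesis .
qed

lemma int_ord_dvd_iff:
  fixes p t :: int
  assumes "p > 0" "coprime p t"
  shows "[t ^ d = 1] (mod p) \<longleftrightarrow> int_ord p t dvd d"
  using int_ord_pow_cong_iff[OF assms, of d 0] by (simp add: cong_sym_eq[of 0] cong_0_iff)

lemma int_ord_pos:
  fixes p t :: int
  assumes "p > 0" "coprime p t"
  shows "int_ord p t > 0"
proof -
  have "coprime (int (nat p)) (int (nat (t mod p)))" using assms by simp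
  then show ?thesis by (simp only: coprime_int_iff int_ord_def ord_gt_0_iff)
qed


lemma int_ord_of_sq:
  fixes p t :: int
  assumes "p > 0" "coprime p t" "n > 0" "[t^(2*n) = 1] (mod p)"
    "\<And>k. 0 < k \<Longrightarrow> k < n \<Longrightarrow> \<not> [t^(2*k) = 1] (mod p)"
  shows "int_ord p t = (if [t^n = 1] (mod p) then n else 2*n)"
proof -
  define m where "m = int_ord p t"
  note dvd_iff = int_ord_dvd_iff[OF assms(1,2), folded m_def]
  have m: "m dvd 2*n" "m > 0" using assms(3,4) dvd_iff by (auto intro!: gr0I)
  have least: "n \<le> k" if "0 < k" "m dvd 2*k" for k
    using assms(5)[of k] that dvd_iff[of "2*k"] by force
  show ?thesis
  proof (cases "[t^n = 1] (mod p)")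
    case True
    then have "m dvd n" by (simp add: dvd_iff)
    then show ?thesis using True m least[of m] assms(3) by (simp add: dvd_imp_le le_antisym flip: m_def)
  next
    case False
    then have "\<not> m dvd n" by (simp add: dvd_iff)
    then have "even m" using m(1) by (metis coprime_dvd_mult_right_iff coprime_right_2_iff_odd)
    then obtain k where k: "m = 2*k" by blast
    then have "k dvd n" "0 < k" using m by auto
    then have "k = n" using least[of k] k assms(3) dvd_imp_le by (simp add: le_antisym)
    then show ?thesis using False k by (simp add: m_def)
  qed
qed

lemma tau_eq_int_ord:
  fixes p t :: int and x :: "nat \<Rightarrow> int"
  assumes "p > 0" "coprime p t" "\<And>j. [x j = t^j] (mod p)"
  shows "tau x p = int_ord p t"
proof -
  define m where "m = int_ord p t"
  have shift: "[x (k + s) = x k] (mod p) \<longleftrightarrow> m dvd s" for k s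
  proof -
    have "[x (k + s) = x k] (mod p) \<longleftrightarrow> [t^(k + s) = t^k] (mod p)"
      using assms(3) by (meson cong_sym cong_trans)
    also have "\<dots> \<longleftrightarrow> [k + s = k] (mod m)"
      by (simp add: int_ord_pow_cong_iff[OF assms(1,2)] m_def)
    finally show ?thesis by (simp add: cong_add_lcancel_0_nat cong_0_iff)
  qed
  have "m > 0" using int_ord_pos[OF assms(1,2)] by (simp add: m_def)
  then show ?thesis
    unfolding tau_def shift m_def[symmetric]
    by (intro Least_equality) (auto dest: dvd_imp_le)
qed

lemma rho_eq_int_ord:
  fixes p t :: int and x :: "nat \<Rightarrow> int"
  assumes "p > 0" "coprime p t" "\<And>j. [x j = t^j] (mod p)"
  shows "rho x p = int_ord p t"
proof -
  define m where "m = int_ord p t"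
  have m: "m > 0" using int_ord_pos[OF assms(1,2)] by (simp add: m_def)
  have pow_iff: "[t^i = t^j] (mod p) \<longleftrightarrow> [i = j] (mod m)" for i j
    by (simp add: int_ord_pow_cong_iff[OF assms(1,2)] m_def)
  have "x k mod p = t^(k mod m) mod p" for k
    using assms(3)[of k] pow_iff[of k "k mod m"] by (simp add: cong_def)
  then have "(\<lambda>k. x k mod p) ` UNIV = (\<lambda>k. t^k mod p) ` {..<m}"
    using m by (auto simp: image_iff) (metis mod_less)
  moreover have "inj_on (\<lambda>k. t^k mod p) {..<m}"
    using pow_iff by (auto simp: inj_on_def cong_def intro: cong_less_modulus_unique_nat)
  ultimately show ?thesis by (simp add: rho_def card_image m_def)
qed

fun root_seq :: "int \<Rightarrow> int \<Rightarrow> nat \<Rightarrow> int" where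
  "root_seq a t 0 = 1"
| "root_seq a t (Suc 0) = t"
| "root_seq a t (Suc (Suc j)) = a * root_seq a t (Suc j) + root_seq a t j"

lemma root_seq_in_Lf: "root_seq a t \<in> Lf a"
  by (simp add: Lf_def)

lemma root_seq_cong:
  fixes a p t :: int
  assumes "p dvd t^2 - a*t - 1"
  shows "[root_seq a t j = t^j] (mod p)"
  using assms
proof (induction a t j rule: root_seq.induct)
  case (3 a t j)
  have "[a * root_seq a t (Suc j) + root_seq a t j = a * t^(Suc j) + t^j] (mod p)"
    using 3 by (intro cong_add cong_mult cong_refl)
  moreover have "t^(Suc (Suc j)) - (a * t^(Suc j) + t^j) = t^j * (t^2 - a*t - 1)"
    by (simp add: power2_eq_square algebra_simps)
  then have "[t^(Suc (Suc j)) = a * t^(Suc j) + t^j] (mod p)"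
    using 3(3) by (simp add: cong_iff_dvd_diff)
  ultimately show ?case by (simp only: root_seq.simps) (metis cong_sym cong_trans)
qed auto

lemma root_seq_tau_rho:
  fixes a p t :: int
  assumes "prime p" "p dvd t^2 - a*t - 1"
  shows "tau (root_seq a t) p = int_ord p t" "rho (root_seq a t) p = int_ord p t"
    "\<not> p dvd root_seq a t j"
proof -
  have p: "p > 0" using assms(1) by (simp add: prime_gt_0_int)
  have t: "\<not> p dvd t" using root_not_dvd(1)[OF assms] .
  then have "coprime p t" using assms(1) by (simp add: prime_imp_coprime)
  note seq = root_seq_cong[OF assms(2)]
  show "tau (root_seq a t) p = int_ord p t" by (rule tau_eq_int_ord[OF p \<open>coprime p t\<close> seq])
  show "rho (root_seq a t) p = int_ord p t" by (rule rho_eq_int_ord[OF p \<open>coprime p t\<close> seq])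
  show "\<not> p dvd root_seq a t j"
    using cong_dvd_iff[OF seq[of j]] t assms(1) by (auto dest: prime_dvd_power)
qed

lemma odd_prime_not_dvd_2:
  fixes p :: int
  assumes "prime p" "odd p"
  shows "\<not> p dvd 2"
  using assms zdvd_imp_le[of p 2] prime_ge_2_int[of p] by force

lemma root_exists:
  fixes a p :: int
  assumes p: "prime p" "odd p" and "Legendre (discr a) p = 1"
  obtains r where "p dvd r^2 - a*r - 1"
proof -
  have "QuadRes p (discr a)" using assms(3) by (auto simp: Legendre_def split: if_splits)
  then obtain y where y: "[y^2 = discr a] (mod p)" by (auto simp: QuadRes_def)
  define y' where "y' = (if even (a + y) then y else y + p)"
  have "[y' = y] (mod p)" by (auto simp: y'_def cong_iff_dvd_diff)
  then have "p dvd y'^2 - discr a" using y by (metis cong_iff_dvd_diff cong_pow cong_trans)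
  moreover have "even (a + y')" using p(2) by (auto simp: y'_def)
  then obtain r where r: "y' = 2 * r - a" by (metis add_diff_cancel_left' evenE)
  have "y'^2 - discr a = 2 * (2 * (r^2 - a*r - 1))"
    unfolding r by (simp add: discr_def power2_eq_square algebra_simps)
  ultimately have "p dvd 2 * (2 * (r^2 - a*r - 1))" by simp
  then have "p dvd r^2 - a*r - 1"
    using odd_prime_not_dvd_2[OF p] p(1) by (simp only: prime_dvd_mult_iff) simp
  then show ?thesis by (rule that)
qed

lemma conj_root:
  fixes a p r :: int
  assumes "p dvd r^2 - a*r - 1"
  shows "p dvd (a - r)^2 - a*(a - r) - 1" "[r * (a - r) = -1] (mod p)"
proof -
  have "(a - r)^2 - a*(a - r) - 1 = r^2 - a*r - 1" "r * (a - r) - (-1) = - (r^2 - a*r - 1)"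
    by (simp_all add: power2_eq_square algebra_simps)
  then show "p dvd (a - r)^2 - a*(a - r) - 1" "[r * (a - r) = -1] (mod p)"
    using assms unfolding cong_iff_dvd_diff by (metis, metis dvd_minus_iff)
qed

lemma conj_root_pow_eq_1_iff:
  fixes a p r :: int
  assumes "prime p" "odd p" "odd n" "p dvd r^2 - a*r - 1" "[r^(2*n) = 1] (mod p)"
  shows "[(a - r)^n = 1] (mod p) \<longleftrightarrow> \<not> [r^n = 1] (mod p)"
proof -
  have "[(r * (a - r))^n = (-1)^n] (mod p)" using conj_root(2)[OF assms(4)] by (rule cong_pow)
  then have prod: "[r^n * (a - r)^n = -1] (mod p)" using assms(3) by (simp add: power_mult_distrib)
  have "r^(2*n) - 1 = (r^n - 1) * (r^n + 1)" by (simp add: power_mult power2_eq_square algebra_simps)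
  then have "[r^n = 1] (mod p) \<or> [r^n = -1] (mod p)"
    using assms(1,5) by (simp add: cong_iff_dvd_diff prime_dvd_mult_iff)
  moreover have "\<not> [1 = -1] (mod p)"
    using odd_prime_not_dvd_2[OF assms(1,2)] by (simp add: cong_iff_dvd_diff)
  moreover have "[(a - r)^n = -1] (mod p)" if "[r^n = 1] (mod p)"
    using prod cong_mult[OF that cong_refl, of "(a - r)^n"] by (metis cong_sym cong_trans mult_1)
  moreover have "[(a - r)^n = 1] (mod p)" if "[r^n = -1] (mod p)"
  proof -
    have "[- ((a - r)^n) = -1] (mod p)"
      using prod cong_mult[OF that cong_refl, of "(a - r)^n"] by (metis cong_sym cong_trans mult_minus1)
    then show ?thesis by (simp add: cong_minus_minus_iff)
  qed
  ultimately show ?thesis by (metis cong_sym cong_trans)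
qed

lemma root_int_ord:
  fixes a p t :: int
  assumes "a \<noteq> 0" "prime p" "primitive_divisor a p n" "n > 0" "p dvd t^2 - a*t - 1"
  shows "int_ord p t = (if [t^n = 1] (mod p) then n else 2*n)"
proof (rule int_ord_of_sq)
  show "p > 0" using assms(2) by (simp add: prime_gt_0_int)
  show "coprime p t" using root_not_dvd(1)[OF assms(2,5)] assms(2) by (simp add: prime_imp_coprime)
qed (use assms root_pow_cong[OF assms(1,2,3,5)] in auto)

theorem mainTheorem11:
  fixes a p :: int and n :: nat
  assumes "a \<ge> 1" and "n \<ge> 3"
    and "prime p" and "odd p"
    and "primitive_divisor a p n"
    and "Legendre (discr a) p = 1"
  shows "(\<exists>x\<in>Lf a. tau x p = 2 * n \<and> rho x p = 2 * n \<and> (\<forall>j. \<not> p dvd x j))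
       \<and> (odd n \<longrightarrow> (\<exists>y\<in>Lf a. tau y p = n \<and> rho y p = n \<and> (\<forall>j. \<not> p dvd y j)))"
proof -
  have a: "a \<noteq> 0" and n: "n > 0" using assms(1,2) by auto
  have seq: "\<exists>x\<in>Lf a. tau x p = m \<and> rho x p = m \<and> (\<forall>j. \<not> p dvd x j)"
    if "p dvd t^2 - a*t - 1" "int_ord p t = m" for t m
    using root_seq_in_Lf root_seq_tau_rho[OF assms(3) that(1)] that(2) by blast
  note ord = root_int_ord[OF a assms(3,5) n]
  note pow_2n = root_pow_cong(1)[OF a assms(3,5)]
  obtain r where r: "p dvd r^2 - a*r - 1" using root_exists[OF assms(3,4,6)] .
  note r' = conj_root(1)[OF r]
  have "\<exists>t. p dvd t^2 - a*t - 1 \<and> \<not> [t^n = 1] (mod p)"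
  proof (cases "even n")
    case True
    then obtain k where "n = 2*k" by blast
    then have "\<not> [r^n = 1] (mod p)" using root_pow_cong(2)[OF a assms(3,5) r, of k] n by simp
    then show ?thesis using r by blast
  next
    case False
    then show ?thesis using r r' conj_root_pow_eq_1_iff[OF assms(3,4) False r pow_2n[OF r]] by blast
  qed
  moreover have "\<exists>t. p dvd t^2 - a*t - 1 \<and> [t^n = 1] (mod p)" if "odd n"
    using r r' conj_root_pow_eq_1_iff[OF assms(3,4) that r pow_2n[OF r]] by blast
  ultimately show ?thesis using seq ord by metis
qed

end
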